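(* Let $\ell\ge2$ and $k\ge1$ be integers. Let $\Upsilon_\ell^k$ be the map sending a partition $\nu=(\nu_1,\ldots,\nu_k)$ with $k$ nonzero parts to the partition $(\nu_1-1,\ldots,\nu_k-1)$ (zero parts discarded), i.e. deleting the first column of the diagram. Then $\Upsilon_\ell^k$ is a bijection from $\{\nu:\nu_1\le\ell-1,\ len(\nu)=k\}$ onto $\{\sigma:\sigma_1\le\ell-2,\ len(\sigma)\le k\}$, and for every $\ell$-core $\lambda$ with $len(\lambda)=k$, \[ \rho_{\ell-1}\big(\widetilde{\Phi_\ell^k}(\lambda)\big)=\Upsilon_\ell^k\big(\rho_\ell(\lambda)\big). \]
   Context: Partitions are in English notation; box $(x,y)$ is in row $x$, column $y$; $len(\mu)$ is the number of nonzero parts. The hook length $h^\mu_{(a,c)}$ of a box is the number of boxes of $\mu$ in row $a$ weakly right of it plus the number in column $c$ strictly below it. An $m$-core is a partition none of whose hook lengths is divisible by $m$. Lapointe–Morse map: for $m\ge1$ and an $m$-core $\mu$, $\rho_m(\mu)$ is the partition whose $x$-th part is the number of boxes in row $x$ of $\mu$ having hook length $\le m$ (i.e. left-justify the rows of the skew diagram $\mu/\gamma$, where $\gamma$ consists of the boxes of $\mu$ with hook length $>m$). It is known that $\rho_m$ is a bijection from $m$-cores onto partitions with first part $\le m-1$, preserving the number of nonzero parts. For an $\ell$-core $\lambda$ with $len(\lambda)=k$, $\widetilde{\Phi_\ell^k}(\lambda)$ is obtained from the diagram of $\lambda$ by deleting every column $y$ with $h^\lambda_{(1,y)}\equiv h^\lambda_{(1,1)}\pmod\ell$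 and shifting the remaining columns left; equivalently it is the transpose of $\Phi_\ell^k(\lambda^{tr})$, where for an $\ell$-core $\nu$ with first part $k$, $\Phi_\ell^k(\nu)$ deletes all rows $x$ with $h^\nu_{(x,1)}\equiv h^\nu_{(1,1)}\pmod\ell$. It is known that $\widetilde{\Phi_\ell^k}(\lambda)$ is an $(\ell-1)$-core with at most $k$ nonzero parts. *)

theory Defs
  imports Main
begin

text \<open>A partition is a weakly decreasing list of positive naturals; part x (1-based) is
  the (x-1)-th list entry. The number of nonzero parts len is the list length.\<close>

definition is_partition :: "nat list \<Rightarrow> bool" where
  "is_partition mu \<longleftrightarrow> sorted_wrt (\<ge>) mu \<and> 0 \<notin> set mu"

definition part :: "nat list \<Rightarrow> nat \<Rightarrow> nat" where
  "part mu x = (if 1 \<le> x \<and> x \<le> length mu then mu ! (x - 1) else 0)"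

definition first_part :: "nat list \<Rightarrow> nat" where
  "first_part mu = part mu 1"

definition in_diagram :: "nat list \<Rightarrow> nat \<Rightarrow> nat \<Rightarrow> bool" where
  "in_diagram mu x y \<longleftrightarrow> 1 \<le> x \<and> 1 \<le> y \<and> y \<le> part mu x"

definition col_len :: "nat list \<Rightarrow> nat \<Rightarrow> nat" where
  "col_len mu c = card {x. 1 \<le> x \<and> x \<le> length mu \<and> c \<le> part mu x}"

definition hook :: "nat list \<Rightarrow> nat \<Rightarrow> nat \<Rightarrow> nat" where
  "hook mu a c = (part mu a + 1 - c) + (col_len mu c - a)"

definition is_core :: "nat \<Rightarrow> nat list \<Rightarrow> bool" where
  "is_core m mu \<longleftrightarrow> is_partition mu \<and>
     (\<forall>x y. in_diagram mu x y \<longrightarrow> \<not> m dvd hook mu x y)"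

definition rho :: "nat \<Rightarrow> nat list \<Rightarrow> nat list" where
  "rho m mu = filter (\<lambda>n. 0 < n)
     (map (\<lambda>x. card {y. 1 \<le> y \<and> y \<le> part mu x \<and> hook mu x y \<le> m}) [1..<length mu + 1])"

definition Phi_tilde :: "nat \<Rightarrow> nat list \<Rightarrow> nat list" where
  "Phi_tilde l lam = filter (\<lambda>n. 0 < n)
     (map (\<lambda>x. card {y. 1 \<le> y \<and> y \<le> part lam x \<and>
                         \<not> (hook lam 1 y mod l = hook lam 1 1 mod l)}) [1..<length lam + 1])"

definition Upsilon :: "nat list \<Rightarrow> nat list" where
  "Upsilon nu = filter (\<lambda>n. 0 < n) (map (\<lambda>n. n - 1) nu)"

end

theory Submission
  imports Defs
begin

text \<open>Upsilon is inverted by putting back a first column of length k. For the identity, fix a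
  row x of the l-core lam. Within row x, hooks differ from the hooks of row 1 by a constant, so
  the boxes of row x in deleted columns have pairwise congruent hooks modulo l. As no hook equals
  l, at most one of them has hook below l, and the rightmost one does: otherwise its hook minus l
  would be the hook of a box further right (again in a deleted column) or the hook of a box below
  would be l, because the arm hooks of a box and its hook minus its leg hooks exactly fill the
  values below its hook. Deleting the columns preserves the lengths of the kept columns and
  lowers the hook of a kept box by the number of deleted columns to its right; when the hook h
  exceeds l, those deleted boxes have distinct congruent hooks below h, so there are at most
  h - l of them. Hence a kept box has hook at most l - 1 afterwards iff it had hook at most l
  before, and each row of the image under rho (l - 1) is the corresponding row of rho l lam with
  one box fewer.\<close>

section \<open>Hook lengths of partitions\<close>

lemma part_eq_0: "x = 0 \<or> length mu < x \<Longrightarrow> part mu x = 0"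
  by (auto simp: part_def)

lemma part_antimono:
  assumes "is_partition mu" "1 \<le> x" "x \<le> x'"
  shows "part mu x' \<le> part mu x"
proof (cases "x < x' \<and> x' \<le> length mu")
  case True
  then have "x - 1 < x' - 1" "x' - 1 < length mu" using assms(2) by auto
  then have "mu ! (x' - 1) \<le> mu ! (x - 1)"
    using assms(1) sorted_wrt_nth_less[of "(\<ge>)" mu] by (simp add: is_partition_def)
  then show ?thesis using True assms(2) by (simp add: part_def)
qed (use assms in \<open>auto simp: part_def\<close>)

lemma downward_closed_eq_atLeastAtMost:
  assumes "finite S" "\<forall>x\<in>S. 1 \<le> x" "\<forall>x\<in>S. \<forall>x'. 1 \<le> x' \<and> x' \<le> x \<longrightarrow> x' \<in> S"
  shows "S = {1..card S}"
proof (cases "S = {}")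
  case False
  define M where "M = Max S"
  have "S = {1..M}"
  proof (intro equalityI subsetI)
    fix x assume "x \<in> S"
    then show "x \<in> {1..M}" using assms(1,2) by (simp add: M_def)
  next
    fix x assume "x \<in> {1..M}"
    then show "x \<in> S" using Max_in[OF assms(1) False] assms(3) by (auto simp: M_def)
  qed
  then show ?thesis by simp
qed simp

lemma col_len_ge_iff:
  assumes "is_partition mu" "1 \<le> x" "1 \<le> y"
  shows "x \<le> col_len mu y \<longleftrightarrow> y \<le> part mu x"
proof -
  define S where "S = {x. 1 \<le> x \<and> x \<le> length mu \<and> y \<le> part mu x}"
  have "finite S" by (simp add: S_def)
  moreover have "\<forall>x\<in>S. 1 \<le> x" by (simp add: S_def)
  moreover have "\<forall>x\<in>S. \<forall>x'. 1 \<le> x' \<and> x' \<le> x \<longrightarrow> x' \<in> S"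
    unfolding S_def using part_antimono[OF assms(1)] by (auto intro: le_trans)
  ultimately have S_eq: "S = {1..card S}" by (rule downward_closed_eq_atLeastAtMost)
  have "col_len mu y = card S" by (simp add: col_len_def S_def)
  then have "x \<le> col_len mu y \<longleftrightarrow> x \<in> S" using assms(2) by (subst S_eq) simp
  also have "\<dots> \<longleftrightarrow> y \<le> part mu x"
  proof
    assume "y \<le> part mu x"
    then have "x \<le> length mu" using assms(3) part_eq_0[of x mu] by (cases "x \<le> length mu") auto
    then show "x \<in> S" using \<open>y \<le> part mu x\<close> assms(2) by (simp add: S_def)
  qed (simp add: S_def)
  finally show ?thesis .
qed

lemma col_len_antimono: "y \<le> y' \<Longrightarrow> col_len mu y' \<le> col_len mu y"
  unfolding col_len_def by (rule card_mono) auto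

lemma hook_pos: "y \<le> part mu x \<Longrightarrow> 1 \<le> hook mu x y"
  by (simp add: hook_def)

lemma hook_decreasing_right:
  assumes "y < y'" "y' \<le> part mu x"
  shows "hook mu x y' < hook mu x y"
  using col_len_antimono[of y y' mu] assms by (simp add: hook_def)

context
  fixes mu :: "nat list"
  assumes partition: "is_partition mu"
begin

lemma of_nat_hook:
  assumes "1 \<le> x" "1 \<le> y" "y \<le> part mu x"
  shows "int (hook mu x y) = int (part mu x) + int (col_len mu y) + 1 - int x - int y"
  using col_len_ge_iff[OF partition assms(1,2)] assms by (simp add: hook_def of_nat_diff)

lemma hook_decreasing_down:
  assumes "1 \<le> x" "x < x'" "1 \<le> y" "y \<le> part mu x'"
  shows "hook mu x' y < hook mu x y"
  using part_antimono[OF partition, of x x'] of_nat_hook[of x' y] of_nat_hook[of x y] assms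
  by simp

lemma hook_first_row_shift:
  assumes "1 \<le> x" "1 \<le> y" "y \<le> part mu x"
  shows "hook mu 1 y + (part mu x + 1) = hook mu x y + (part mu 1 + x)"
proof -
  have "y \<le> part mu 1" using part_antimono[OF partition, of 1 x] assms by simp
  then show ?thesis
    using of_nat_hook[of 1 y] of_nat_hook[OF assms] assms by simp
qed

text \<open>The two hooks sum to the hook of (x,y) plus the hook of (x',y') if (x',y') is a box,
  and to less than the hook of (x,y) otherwise.\<close>
lemma hook_arm_plus_hook_leg_ne:
  assumes "1 \<le> x" "1 \<le> y" "y < y'" "y' \<le> part mu x" "x < x'" "x' \<le> col_len mu y"
  shows "hook mu x y' + hook mu x' y \<noteq> hook mu x y"
proof -
  have y_x': "y \<le> part mu x'" using col_len_ge_iff[OF partition, of x' y] assms by simp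
  have "int (hook mu x y') + int (hook mu x' y) - int (hook mu x y)
        = int (part mu x') + int (col_len mu y') + 1 - int x' - int y'"
    using of_nat_hook[of x y'] of_nat_hook[of x' y] of_nat_hook[of x y] y_x' assms by simp
  moreover have "y' \<le> part mu x' \<longleftrightarrow> x' \<le> col_len mu y'"
    using col_len_ge_iff[OF partition, of x' y'] assms by simp
  ultimately show ?thesis by (cases "y' \<le> part mu x'") auto
qed

lemma hook_values_arm_or_leg:
  assumes "1 \<le> x" "1 \<le> y" "y \<le> part mu x" "0 < d" "d < hook mu x y"
  obtains y' where "y < y'" "y' \<le> part mu x" "hook mu x y' = d"
  | x' where "x < x'" "x' \<le> col_len mu y" "hook mu x' y + d = hook mu x y"
proof -
  define h where "h = hook mu x y"
  define A where "A = hook mu x ` {y<..part mu x}"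
  define B where "B = (\<lambda>x'. h - hook mu x' y) ` {x<..col_len mu y}"
  have leg_box: "y \<le> part mu x'" if "x' \<le> col_len mu y" "x < x'" for x'
    using col_len_ge_iff[OF partition, of x' y] that assms by simp
  have leg_less: "hook mu x' y < h" if "x' \<le> col_len mu y" "x < x'" for x'
    using hook_decreasing_down[OF assms(1) that(2) assms(2) leg_box[OF that]] by (simp add: h_def)
  have "inj_on (hook mu x) {y<..part mu x}"
    by (rule linorder_inj_onI') (metis greaterThanAtMost_iff hook_decreasing_right less_irrefl)
  then have card_A: "card A = part mu x - y" by (simp add: A_def card_image)
  have "inj_on (\<lambda>x'. h - hook mu x' y) {x<..col_len mu y}"
  proof (rule linorder_inj_onI')
    fix i j assume "i \<in> {x<..col_len mu y}" "j \<in> {x<..col_len mu y}" "i < j"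
    then show "h - hook mu i y \<noteq> h - hook mu j y"
      using hook_decreasing_down[of i j y] leg_box[of j] leg_less[of i] assms by fastforce
  qed
  then have card_B: "card B = col_len mu y - x" by (simp add: B_def card_image)
  have sub_A: "A \<subseteq> {1..<h}"
    using hook_decreasing_right[of y _ mu x] hook_pos[of _ mu x] by (auto simp: A_def h_def)
  have sub_B: "B \<subseteq> {1..<h}"
  proof
    fix v assume "v \<in> B"
    then obtain x' where "x < x'" "x' \<le> col_len mu y" "v = h - hook mu x' y" by (auto simp: B_def)
    then show "v \<in> {1..<h}" using leg_less[of x'] hook_pos[OF leg_box[of x']] by auto
  qed
  have "A \<inter> B = {}"
  proof -
    have "hook mu x y' \<noteq> h - hook mu x' y"
      if "y < y'" "y' \<le> part mu x" "x < x'" "x' \<le> col_len mu y" for y' x'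
      using hook_arm_plus_hook_leg_ne[OF assms(1,2) that] leg_less[OF that(4,3)] by (simp add: h_def)
    then show ?thesis by (auto simp: A_def B_def)
  qed
  then have "card (A \<union> B) = card A + card B" by (simp add: card_Un_disjoint A_def B_def)
  also have "\<dots> = card {1..<h}" using card_A card_B assms(3) by (simp add: h_def hook_def)
  finally have "A \<union> B = {1..<h}" using sub_A sub_B by (intro card_subset_eq) auto
  moreover have "d \<in> {1..<h}" using assms by (simp add: h_def)
  ultimately consider "d \<in> A" | "d \<in> B" by blast
  then show thesis
  proof cases
    case 1 then show thesis using that(1) by (auto simp: A_def)
  next
    case 2
    then obtain x' where "x < x'" "x' \<le> col_len mu y" "d = h - hook mu x' y" by (auto simp: B_def)
    then show thesis using that(2) leg_less[of x'] by (simp add: h_def)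
  qed
qed

end

lemma mod_eq_iff_of_add_eq:
  fixes a b a' b' c e l :: nat
  assumes "a + c = a' + e" "b + c = b' + e"
  shows "a mod l = b mod l \<longleftrightarrow> a' mod l = b' mod l"
proof (cases "a \<le> b")
  case True
  then have "a' \<le> b'" "b - a = b' - a'" using assms by auto
  then show ?thesis using True by (metis mod_eq_dvd_iff_nat)
next
  case False
  then have "b' \<le> a'" "a - b = a' - b'" "b \<le> a" using assms by auto
  then show ?thesis by (metis mod_eq_dvd_iff_nat)
qed

lemma card_congruent_subset_le:
  fixes V :: "nat set"
  assumes "V \<subseteq> {1..<h}" "\<forall>v\<in>V. \<forall>w\<in>V. v mod l = w mod l" "2 \<le> l" "l < h"
  shows "card V + l \<le> h"
proof -
  have inj: "inj_on (\<lambda>v. (v - 1) div l) V"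
  proof (rule inj_onI)
    fix v w assume vw: "v \<in> V" "w \<in> V" "(v - 1) div l = (w - 1) div l"
    have pos: "1 \<le> v" "1 \<le> w" using assms(1) vw(1,2) by auto
    have "v mod l = w mod l" using assms(2) vw(1,2) by blast
    then have "(v - 1) mod l = (w - 1) mod l"
      using mod_eq_iff_of_add_eq[of "v - 1" 1 v 0 "w - 1" w l] pos by linarith
    then have "v - 1 = w - 1" using vw(3) by (metis div_mult_mod_eq)
    then show "v = w" using pos by linarith
  qed
  have sub: "(\<lambda>v. (v - 1) div l) ` V \<subseteq> {..(h - 2) div l}"
  proof
    fix u assume "u \<in> (\<lambda>v. (v - 1) div l) ` V"
    then obtain v where "v \<in> V" "u = (v - 1) div l" by blast
    moreover from this have "v < h" using assms(1) by auto
    then have "v - 1 \<le> h - 2" by linarith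
    ultimately show "u \<in> {..(h - 2) div l}" by (simp add: div_le_mono)
  qed
  have "card V = card ((\<lambda>v. (v - 1) div l) ` V)" using card_image[OF inj] by simp
  also have "\<dots> \<le> card {..(h - 2) div l}" using sub by (intro card_mono) simp_all
  finally have "card V \<le> (h - 2) div l + 1" by simp
  moreover have "(h - 2) div l < h - l"
  proof -
    obtain j where j: "h = Suc l + j" using less_imp_Suc_add[OF assms(4)] by auto
    obtain i where i: "l = 2 + i" using le_Suc_ex[OF assms(3)] by blast
    have "h - 2 < (h - l) * l" using i j by (simp add: algebra_simps)
    then show ?thesis by (simp add: less_mult_imp_div_less)
  qed
  ultimately show ?thesis by linarith
qed

definition count_upto :: "(nat \<Rightarrow> bool) \<Rightarrow> nat \<Rightarrow> nat" where
  "count_upto P n = card {y. 1 \<le> y \<and> y \<le> n \<and> P y}"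

lemma count_upto_mono: "n \<le> n' \<Longrightarrow> count_upto P n \<le> count_upto P n'"
  unfolding count_upto_def by (rule card_mono) auto

lemma count_upto_strict_mono:
  assumes "P y" "1 \<le> y" "n < y"
  shows "count_upto P n < count_upto P y"
  unfolding count_upto_def
proof (rule psubset_card_mono)
  show "finite {y'. 1 \<le> y' \<and> y' \<le> y \<and> P y'}" by simp
  show "{y'. 1 \<le> y' \<and> y' \<le> n \<and> P y'} \<subset> {y'. 1 \<le> y' \<and> y' \<le> y \<and> P y'}"
  proof -
    have "y \<in> {y'. 1 \<le> y' \<and> y' \<le> y \<and> P y'}" "y \<notin> {y'. 1 \<le> y' \<and> y' \<le> n \<and> P y'}"
      using assms by auto
    moreover have "{y'. 1 \<le> y' \<and> y' \<le> n \<and> P y'} \<subseteq> {y'. 1 \<le> y' \<and> y' \<le> y \<and> P y'}"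
      using assms by auto
    ultimately show ?thesis by blast
  qed
qed

lemma count_upto_le_iff:
  assumes "P y" "1 \<le> y"
  shows "count_upto P y \<le> count_upto P n \<longleftrightarrow> y \<le> n"
  using count_upto_mono[of y n P] count_upto_strict_mono[of P y n, OF assms] by linarith

lemma count_upto_pos: "P y \<Longrightarrow> 1 \<le> y \<Longrightarrow> 1 \<le> count_upto P y"
  using count_upto_strict_mono[of P y 0] by simp

lemma count_upto_split:
  assumes "y \<le> n"
  shows "count_upto P n = count_upto P y + card {y'. y < y' \<and> y' \<le> n \<and> P y'}"
proof -
  have "{y'. 1 \<le> y' \<and> y' \<le> n \<and> P y'} =
        {y'. 1 \<le> y' \<and> y' \<le> y \<and> P y'} \<union> {y'. y < y' \<and> y' \<le> n \<and> P y'}"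
    using assms by auto
  then show ?thesis unfolding count_upto_def by (simp add: card_Un_disjoint disjoint_iff)
qed

lemma card_greaterThanAtMost_split:
  "card {y'. y < y' \<and> y' \<le> n \<and> P y'} + card {y'. y < y' \<and> y' \<le> n \<and> \<not> P y'} = n - y"
proof -
  have "{y<..n} = {y'. y < y' \<and> y' \<le> n \<and> P y'} \<union> {y'. y < y' \<and> y' \<le> n \<and> \<not> P y'}" by auto
  then have "card {y<..n} = card {y'. y < y' \<and> y' \<le> n \<and> P y'} + card {y'. y < y' \<and> y' \<le> n \<and> \<not> P y'}"
    by (simp add: card_Un_disjoint disjoint_iff)
  then show ?thesis by simp
qed

lemma bij_betw_count_upto:
  "bij_betw (count_upto P) {y. 1 \<le> y \<and> y \<le> n \<and> P y} {1..count_upto P n}"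
proof -
  let ?S = "{y. 1 \<le> y \<and> y \<le> n \<and> P y}"
  have inj: "inj_on (count_upto P) ?S"
    by (rule linorder_inj_onI') (metis (mono_tags) count_upto_strict_mono mem_Collect_eq less_irrefl)
  moreover have "count_upto P ` ?S \<subseteq> {1..count_upto P n}"
    using count_upto_pos count_upto_mono by fastforce
  moreover have "card (count_upto P ` ?S) = card {1..count_upto P n}"
    using card_image[OF inj] by (simp add: count_upto_def)
  ultimately show ?thesis by (simp add: bij_betw_def card_subset_eq)
qed

lemma filter_pos_eq_takeWhile:
  "sorted_wrt (\<ge>) (xs :: nat list) \<Longrightarrow> filter (\<lambda>n. 0 < n) xs = takeWhile (\<lambda>n. 0 < n) xs"
proof (induction xs)
  case (Cons a xs)
  then show ?case by (cases "0 < a") (auto simp: filter_empty_conv)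
qed simp

lemma part_filter_pos:
  assumes "sorted_wrt (\<ge>) (xs :: nat list)" "i < length xs"
  shows "part (filter (\<lambda>n. 0 < n) xs) (Suc i) = xs ! i"
proof -
  define ys where "ys = takeWhile (\<lambda>n. 0 < n) xs"
  have ys: "filter (\<lambda>n. 0 < n) xs = ys" using filter_pos_eq_takeWhile[OF assms(1)] by (simp add: ys_def)
  show ?thesis
  proof (cases "i < length ys")
    case True
    then show ?thesis using ys takeWhile_nth[of i "\<lambda>n. 0 < n" xs] by (simp add: part_def ys_def)
  next
    case False
    then have "length ys < length xs" using assms(2) by simp
    then have "xs ! length ys = 0" using nth_length_takeWhile[of "\<lambda>n. 0 < n" xs] by (simp add: ys_def)
    moreover have "xs ! i \<le> xs ! length ys"
      using False sorted_wrt_nth_less[OF assms(1) _ assms(2), of "length ys"]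
      by (cases "i = length ys") auto
    ultimately show ?thesis using False ys by (simp add: part_def)
  qed
qed

lemma filter_pos_map_pred_filter_pos:
  "filter (\<lambda>n. 0 < n) (map (\<lambda>n. n - 1) (filter (\<lambda>n. 0 < n) (xs :: nat list))) =
   filter (\<lambda>n. 0 < n) (map (\<lambda>n. n - 1) xs)"
  by (induction xs) auto

lemma filter_pos_map_upt_truncate:
  assumes "\<forall>x. m < x \<longrightarrow> f x = (0 :: nat)" "m \<le> n"
  shows "filter (\<lambda>n. 0 < n) (map f [1..<n + 1]) = filter (\<lambda>n. 0 < n) (map f [1..<m + 1])"
  using assms(2)
proof (induction n rule: dec_induct)
  case (step n)
  then show ?case using assms(1) by simp
qed simp

section \<open>Deleting the columns of a residue class\<close>

definition deleted_col :: "nat \<Rightarrow> nat list \<Rightarrow> nat \<Rightarrow> bool" where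
  "deleted_col l lam y \<longleftrightarrow> hook lam 1 y mod l = hook lam 1 1 mod l"

text \<open>A kept column y becomes column kept_upto l lam y of Phi_tilde l lam.\<close>
abbreviation kept_upto :: "nat \<Rightarrow> nat list \<Rightarrow> nat \<Rightarrow> nat" where
  "kept_upto l lam \<equiv> count_upto (\<lambda>y. \<not> deleted_col l lam y)"

lemma Phi_tilde_eq:
  "Phi_tilde l lam = filter (\<lambda>n. 0 < n) (map (\<lambda>x. kept_upto l lam (part lam x)) [1..<length lam + 1])"
  by (simp add: Phi_tilde_def count_upto_def deleted_col_def)

context
  fixes lam :: "nat list"
  assumes partition: "is_partition lam"
begin

lemma deleted_col_iff_hook_cong:
  assumes "1 \<le> x" "1 \<le> a" "a \<le> part lam x" "1 \<le> b" "b \<le> part lam x" "deleted_col l lam a"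
  shows "deleted_col l lam b \<longleftrightarrow> hook lam x a mod l = hook lam x b mod l"
proof -
  have "hook lam 1 a mod l = hook lam 1 b mod l \<longleftrightarrow> hook lam x a mod l = hook lam x b mod l"
    using hook_first_row_shift[OF partition assms(1-3)] hook_first_row_shift[OF partition assms(1,4,5)]
    by (rule mod_eq_iff_of_add_eq)
  then show ?thesis using assms(6) unfolding deleted_col_def by metis
qed

lemma sorted_kept_upto_parts:
  "sorted_wrt (\<ge>) (map (\<lambda>x. kept_upto l lam (part lam x)) [1..<length lam + 1])"
  unfolding sorted_wrt_map
proof (rule sorted_wrt_mono_rel[OF _ sorted_wrt_upt])
  fix x y assume "x \<in> set [1..<length lam + 1]" "y \<in> set [1..<length lam + 1]" "x < y"
  then have "part lam y \<le> part lam x" using part_antimono[OF partition, of x y] by (simp del: upt_Suc)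
  then show "kept_upto l lam (part lam y) \<le> kept_upto l lam (part lam x)" by (rule count_upto_mono)
qed

lemma length_Phi_tilde_le: "length (Phi_tilde l lam) \<le> length lam"
  unfolding Phi_tilde_eq by (metis length_filter_le length_map length_upt diff_add_inverse2)

lemma part_Phi_tilde:
  assumes "1 \<le> x" "x \<le> length lam"
  shows "part (Phi_tilde l lam) x = kept_upto l lam (part lam x)"
proof -
  have "part (Phi_tilde l lam) (Suc (x - 1)) =
        map (\<lambda>x. kept_upto l lam (part lam x)) [1..<length lam + 1] ! (x - 1)"
    unfolding Phi_tilde_eq using assms by (intro part_filter_pos[OF sorted_kept_upto_parts]) auto
  then show ?thesis using assms by (simp del: upt_Suc add: nth_upt)
qed

lemma col_len_Phi_tilde:
  assumes "1 \<le> y" "\<not> deleted_col l lam y"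
  shows "col_len (Phi_tilde l lam) (kept_upto l lam y) = col_len lam y"
proof -
  let ?mu = "Phi_tilde l lam" and ?k = "kept_upto l lam y"
  have pos: "1 \<le> ?k" using count_upto_pos[of "\<lambda>y. \<not> deleted_col l lam y", OF assms(2,1)] .
  have "x \<le> length ?mu \<and> ?k \<le> part ?mu x \<longleftrightarrow> x \<le> length lam \<and> y \<le> part lam x"
    if "1 \<le> x" for x
  proof (cases "x \<le> length lam")
    case True
    have "?k \<le> part ?mu x \<longleftrightarrow> y \<le> part lam x"
      using part_Phi_tilde[OF that True] count_upto_le_iff[of "\<lambda>y. \<not> deleted_col l lam y", OF assms(2,1)]
      by simp
    moreover have "x \<le> length ?mu" if "?k \<le> part ?mu x"
    proof (rule ccontr)
      assume "\<not> x \<le> length ?mu"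
      then have "part ?mu x = 0" by (simp add: part_eq_0)
      then show False using that pos by simp
    qed
    ultimately show ?thesis using True by blast
  next
    case False
    then show ?thesis using length_Phi_tilde_le[of l] by simp
  qed
  then have "{x. 1 \<le> x \<and> x \<le> length ?mu \<and> ?k \<le> part ?mu x} =
             {x. 1 \<le> x \<and> x \<le> length lam \<and> y \<le> part lam x}" by blast
  then show ?thesis by (simp add: col_len_def)
qed
lemma hook_Phi_tilde:
  assumes "1 \<le> x" "x \<le> length lam" "1 \<le> y" "y \<le> part lam x" "\<not> deleted_col l lam y"
  shows "hook (Phi_tilde l lam) x (kept_upto l lam y)
           + card {y'. y < y' \<and> y' \<le> part lam x \<and> deleted_col l lam y'} = hook lam x y"
  using count_upto_split[OF assms(4), of "\<lambda>y. \<not> deleted_col l lam y"]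
    card_greaterThanAtMost_split[of y "part lam x" "deleted_col l lam"]
    part_Phi_tilde[OF assms(1,2)] col_len_Phi_tilde[OF assms(3,5)] assms(4)
  by (simp add: hook_def)

end

section \<open>Cores\<close>

context
  fixes l :: nat and lam :: "nat list"
  assumes core: "is_core l lam" and l_ge_2: "2 \<le> l"
begin

lemma core_is_partition: "is_partition lam"
  using core by (simp add: is_core_def)

lemma core_hook_ne:
  assumes "1 \<le> x" "1 \<le> y" "y \<le> part lam x"
  shows "hook lam x y \<noteq> l"
  using core assms unfolding is_core_def in_diagram_def by (metis dvd_refl)

text \<open>The rightmost deleted column of row x has hook < l: otherwise hook - l is, by the
  complementarity of arm and leg hooks, either the hook of a box further right, which lies in a
  deleted column again, or the hook of a box below is l.\<close>
lemma ex_deleted_col_small_hook: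
  assumes "1 \<le> x" "x \<le> length lam"
  obtains y where "1 \<le> y" "y \<le> part lam x" "deleted_col l lam y" "hook lam x y \<le> l"
proof -
  define D where "D = {y. 1 \<le> y \<and> y \<le> part lam x \<and> deleted_col l lam y}"
  have "lam ! (x - 1) \<in> set lam" using assms by simp
  then have "lam ! (x - 1) \<noteq> 0" using core_is_partition unfolding is_partition_def by metis
  then have "1 \<in> D" using assms by (simp add: D_def deleted_col_def part_def)
  moreover have "finite D" by (simp add: D_def)
  ultimately obtain y0 where y0: "y0 \<in> D" and y0_max: "\<And>y. y \<in> D \<Longrightarrow> y \<le> y0"
    using Max_in Max_ge by blast
  then have y0D: "1 \<le> y0" "y0 \<le> part lam x" "deleted_col l lam y0" by (auto simp: D_def)
  have "hook lam x y0 \<le> l"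
  proof (rule ccontr)
    assume "\<not> hook lam x y0 \<le> l"
    then have d: "0 < hook lam x y0 - l" "hook lam x y0 - l < hook lam x y0" using l_ge_2 by auto
    show False
    proof (cases rule: hook_values_arm_or_leg[OF core_is_partition assms(1) y0D(1,2) d])
      case (1 y')
      then have "hook lam x y0 mod l = hook lam x y' mod l"
        using d by (simp add: le_mod_geq)
      then have "y' \<in> D"
        using deleted_col_iff_hook_cong[OF core_is_partition assms(1) y0D(1,2) _ 1(2) y0D(3)] 1 y0D
        by (simp add: D_def)
      then show False using y0_max 1(1) by fastforce
    next
      case (2 x')
      then have "y0 \<le> part lam x'" using col_len_ge_iff[OF core_is_partition, of x' y0] assms y0D by simp
      moreover have "hook lam x' y0 = l" using 2 d by simp
      ultimately show False using core_hook_ne[of x' y0] 2 assms y0D by simp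
    qed
  qed
  then show thesis using that y0D by blast
qed

lemma deleted_col_small_hook_unique:
  assumes "1 \<le> x" "1 \<le> a" "a \<le> part lam x" "deleted_col l lam a" "hook lam x a \<le> l"
    and "1 \<le> b" "b \<le> part lam x" "deleted_col l lam b" "hook lam x b \<le> l"
  shows "a = b"
proof -
  have "hook lam x a mod l = hook lam x b mod l"
    using deleted_col_iff_hook_cong[OF core_is_partition assms(1-3,6,7,4)] assms(8) by simp
  moreover have "hook lam x a < l" "hook lam x b < l"
    using assms core_hook_ne[OF assms(1-3)] core_hook_ne[OF assms(1,6,7)] by auto
  ultimately have "hook lam x a = hook lam x b" by simp
  then show ?thesis using hook_decreasing_right[of a b lam x] hook_decreasing_right[of b a lam x] assms
    by (cases a b rule: linorder_cases) auto
qed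

lemma card_deleted_cols_small_hook:
  assumes "1 \<le> x" "x \<le> length lam"
  shows "card {y. 1 \<le> y \<and> y \<le> part lam x \<and> deleted_col l lam y \<and> hook lam x y \<le> l} = 1"
proof -
  obtain y0 where y0: "1 \<le> y0" "y0 \<le> part lam x" "deleted_col l lam y0" "hook lam x y0 \<le> l"
    using ex_deleted_col_small_hook[OF assms] .
  then have "{y. 1 \<le> y \<and> y \<le> part lam x \<and> deleted_col l lam y \<and> hook lam x y \<le> l} = {y0}"
    using deleted_col_small_hook_unique[OF assms(1)] by blast
  then show ?thesis by simp
qed

lemma card_deleted_cols_right_le:
  assumes "1 \<le> x" "1 \<le> y" "y \<le> part lam x" "l < hook lam x y"
  shows "card {y'. y < y' \<and> y' \<le> part lam x \<and> deleted_col l lam y'} + l \<le> hook lam x y"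
proof -
  define S where "S = {y'. y < y' \<and> y' \<le> part lam x \<and> deleted_col l lam y'}"
  have "inj_on (hook lam x) S"
    by (rule linorder_inj_onI') (auto simp: S_def dest: hook_decreasing_right)
  then have "card S = card (hook lam x ` S)" by (simp add: card_image)
  also have "\<dots> + l \<le> hook lam x y"
  proof (rule card_congruent_subset_le[OF _ _ l_ge_2 assms(4)])
    show "hook lam x ` S \<subseteq> {1..<hook lam x y}"
      using hook_decreasing_right[of y _ lam x] hook_pos[of _ lam x] by (auto simp: S_def)
    show "\<forall>v\<in>hook lam x ` S. \<forall>w\<in>hook lam x ` S. v mod l = w mod l"
    proof (intro ballI)
      fix v w assume "v \<in> hook lam x ` S" "w \<in> hook lam x ` S"
      then obtain a b where "a \<in> S" "b \<in> S" "v = hook lam x a" "w = hook lam x b" by blast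
      then show "v mod l = w mod l"
        using deleted_col_iff_hook_cong[OF core_is_partition assms(1), of a b l] assms(2)
        by (simp add: S_def)
    qed
  qed
  finally show ?thesis by (simp add: S_def)
qed

text \<open>Deleting columns lowers the hook of a kept box by the number of deleted columns to its
  right; this keeps hooks below l below l (they are not l itself, as lam is an l-core), and keeps
  hooks above l at least l.\<close>
lemma hook_Phi_tilde_le_iff:
  assumes "1 \<le> x" "x \<le> length lam" "1 \<le> y" "y \<le> part lam x" "\<not> deleted_col l lam y"
  shows "hook (Phi_tilde l lam) x (kept_upto l lam y) \<le> l - 1 \<longleftrightarrow> hook lam x y \<le> l"
  using hook_Phi_tilde[OF core_is_partition assms]
    core_hook_ne[OF assms(1,3,4)]
    card_deleted_cols_right_le[OF assms(1,3,4)] l_ge_2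
  by (cases "l < hook lam x y") linarith+

lemma card_small_hooks_Phi_tilde:
  assumes "1 \<le> x" "x \<le> length lam"
  shows "card {j. 1 \<le> j \<and> j \<le> part (Phi_tilde l lam) x \<and> hook (Phi_tilde l lam) x j \<le> l - 1}
       = card {y. 1 \<le> y \<and> y \<le> part lam x \<and> hook lam x y \<le> l} - 1"
proof -
  let ?mu = "Phi_tilde l lam" and ?kept = "kept_upto l lam"
  define K where "K = {y. 1 \<le> y \<and> y \<le> part lam x \<and> \<not> deleted_col l lam y}"
  have bij: "bij_betw ?kept K {1..part ?mu x}"
    using bij_betw_count_upto part_Phi_tilde[OF core_is_partition assms]
    by (simp add: K_def)
  have "{j. 1 \<le> j \<and> j \<le> part ?mu x \<and> hook ?mu x j \<le> l - 1}
        = ?kept ` {y \<in> K. hook lam x y \<le> l}"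
  proof -
    have "?kept ` K = {1..part ?mu x}" using bij by (simp add: bij_betw_def)
    then have "{j. 1 \<le> j \<and> j \<le> part ?mu x \<and> hook ?mu x j \<le> l - 1}
               = {j \<in> ?kept ` K. hook ?mu x j \<le> l - 1}" by auto
    also have "\<dots> = ?kept ` {y \<in> K. hook ?mu x (?kept y) \<le> l - 1}" by auto
    also have "{y \<in> K. hook ?mu x (?kept y) \<le> l - 1} = {y \<in> K. hook lam x y \<le> l}"
      using hook_Phi_tilde_le_iff[OF assms] by (auto simp: K_def)
    finally show ?thesis .
  qed
  moreover have "inj_on ?kept {y \<in> K. hook lam x y \<le> l}"
    using bij by (auto simp: bij_betw_def intro: inj_on_subset)
  ultimately have "card {j. 1 \<le> j \<and> j \<le> part ?mu x \<and> hook ?mu x j \<le> l - 1}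
                   = card {y \<in> K. hook lam x y \<le> l}"
    by (simp add: card_image)
  moreover have "{y. 1 \<le> y \<and> y \<le> part lam x \<and> hook lam x y \<le> l} =
        {y \<in> K. hook lam x y \<le> l} \<union> {y. 1 \<le> y \<and> y \<le> part lam x \<and> deleted_col l lam y \<and> hook lam x y \<le> l}"
    by (auto simp: K_def)
  moreover have "card \<dots> = card {y \<in> K. hook lam x y \<le> l} + 1"
    using card_deleted_cols_small_hook[OF assms]
    by (subst card_Un_disjoint) (auto simp: K_def)
  ultimately show ?thesis by simp
qed

lemma rho_Phi_tilde: "rho (l - 1) (Phi_tilde l lam) = Upsilon (rho l lam)"
proof -
  let ?mu = "Phi_tilde l lam"
  define r where "r m mu x = card {y. 1 \<le> y \<and> y \<le> part mu x \<and> hook mu x y \<le> m}" for m mu x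
  have "rho (l - 1) ?mu = filter (\<lambda>n. 0 < n) (map (r (l - 1) ?mu) [1..<length ?mu + 1])"
    by (simp add: rho_def r_def[abs_def] del: upt_Suc)
  also have "\<dots> = filter (\<lambda>n. 0 < n) (map (r (l - 1) ?mu) [1..<length lam + 1])"
    by (rule filter_pos_map_upt_truncate[symmetric])
      (simp_all add: r_def part_def length_Phi_tilde_le[OF core_is_partition])
  also have "map (r (l - 1) ?mu) [1..<length lam + 1] = map (\<lambda>x. r l lam x - 1) [1..<length lam + 1]"
    using card_small_hooks_Phi_tilde by (simp del: upt_Suc add: r_def)
  also have "filter (\<lambda>n. 0 < n) \<dots> = Upsilon (rho l lam)"
    unfolding Upsilon_def rho_def filter_pos_map_pred_filter_pos by (simp add: r_def comp_def)
  finally show ?thesis .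
qed

end

section \<open>Removing the first column\<close>

definition add_first_column :: "nat \<Rightarrow> nat list \<Rightarrow> nat list" where
  "add_first_column k sigma = map Suc sigma @ replicate (k - length sigma) 1"

lemma first_part_le_iff:
  "sorted_wrt (\<ge>) (mu :: nat list) \<Longrightarrow> first_part mu \<le> m \<longleftrightarrow> (\<forall>n\<in>set mu. n \<le> m)"
  by (cases mu) (auto simp: first_part_def part_def)

lemma length_Upsilon_le: "length (Upsilon nu) \<le> length nu"
  unfolding Upsilon_def by (metis length_filter_le length_map)

lemma is_partition_Upsilon:
  assumes "is_partition nu"
  shows "is_partition (Upsilon nu)"
proof -
  have "sorted_wrt (\<ge>) (map (\<lambda>n. n - 1) nu)"
    unfolding sorted_wrt_map using assms
    by (auto simp: is_partition_def elim: sorted_wrt_mono_rel[rotated])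
  then show ?thesis by (auto simp: is_partition_def Upsilon_def intro: sorted_wrt_filter)
qed

lemma is_partition_add_first_column:
  assumes "is_partition sigma"
  shows "is_partition (add_first_column k sigma)"
proof -
  have "sorted_wrt (\<ge>) (map Suc sigma)"
    unfolding sorted_wrt_map using assms
    by (auto simp: is_partition_def elim: sorted_wrt_mono_rel[rotated])
  moreover have "sorted_wrt (\<ge>) (replicate (k - length sigma) (1 :: nat))"
    by (simp add: sorted_wrt_iff_nth_less)
  ultimately show ?thesis by (auto simp: is_partition_def add_first_column_def sorted_wrt_append)
qed

lemma Upsilon_add_first_column: "is_partition sigma \<Longrightarrow> Upsilon (add_first_column k sigma) = sigma"
  unfolding is_partition_def Upsilon_def add_first_column_def
  by (simp add: comp_def filter_id_conv) (metis gr0I)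

lemma add_first_column_Upsilon:
  "is_partition nu \<Longrightarrow> add_first_column (length nu) (Upsilon nu) = nu"
proof (induction nu)
  case (Cons a nu)
  then have nu: "is_partition nu" "0 < a" "\<forall>n\<in>set nu. 0 < n \<and> n \<le> a"
    by (auto simp: is_partition_def intro: gr0I)
  show ?case
  proof (cases "a = 1")
    case True
    then have "\<forall>n\<in>set nu. n = 1" using nu(3) by force
    then show ?thesis
      using True by (simp add: add_first_column_def Upsilon_def filter_empty_conv replicate_length_same)
  next
    case False
    then have "Upsilon (a # nu) = (a - 1) # Upsilon nu" using nu(2) by (simp add: Upsilon_def)
    then show ?thesis
      using Cons.IH[OF nu(1)] nu(2) False length_Upsilon_le[of nu]
      by (simp add: add_first_column_def Suc_diff_le)
  qed
qed (simp add: add_first_column_def Upsilon_def)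

lemma bij_betw_Upsilon:
  assumes "2 \<le> l"
  shows "bij_betw Upsilon
           {nu. is_partition nu \<and> first_part nu \<le> l - 1 \<and> length nu = k}
           {sigma. is_partition sigma \<and> first_part sigma \<le> l - 2 \<and> length sigma \<le> k}"
proof (rule bij_betw_byWitness[where f' = "add_first_column k"])
  show "\<forall>nu\<in>{nu. is_partition nu \<and> first_part nu \<le> l - 1 \<and> length nu = k}.
          add_first_column k (Upsilon nu) = nu"
    using add_first_column_Upsilon by blast
  show "\<forall>sigma\<in>{sigma. is_partition sigma \<and> first_part sigma \<le> l - 2 \<and> length sigma \<le> k}.
          Upsilon (add_first_column k sigma) = sigma"
    using Upsilon_add_first_column by blast
  show "Upsilon ` {nu. is_partition nu \<and> first_part nu \<le> l - 1 \<and> length nu = k}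
        \<subseteq> {sigma. is_partition sigma \<and> first_part sigma \<le> l - 2 \<and> length sigma \<le> k}"
  proof clarify
    fix nu assume nu: "is_partition nu" "first_part nu \<le> l - 1" "k = length nu"
    have "\<forall>n\<in>set nu. n \<le> l - 1"
      using nu(1,2) first_part_le_iff by (simp add: is_partition_def)
    then have "\<forall>n\<in>set (Upsilon nu). n \<le> l - 2" by (auto simp: Upsilon_def)
    then show "is_partition (Upsilon nu) \<and> first_part (Upsilon nu) \<le> l - 2 \<and> length (Upsilon nu) \<le> length nu"
      using is_partition_Upsilon[OF nu(1)] first_part_le_iff length_Upsilon_le
      by (simp add: is_partition_def)
  qed
  show "add_first_column k ` {sigma. is_partition sigma \<and> first_part sigma \<le> l - 2 \<and> length sigma \<le> k}
        \<subseteq> {nu. is_partition nu \<and> first_part nu \<le> l - 1 \<and> length nu = k}"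
  proof clarify
    fix sigma assume sigma: "is_partition sigma" "first_part sigma \<le> l - 2" "length sigma \<le> k"
    have "\<forall>n\<in>set sigma. n \<le> l - 2"
      using sigma(1,2) first_part_le_iff by (simp add: is_partition_def)
    then have "\<forall>n\<in>set (add_first_column k sigma). n \<le> l - 1"
      using assms by (auto simp: add_first_column_def)
    then show "is_partition (add_first_column k sigma) \<and>
               first_part (add_first_column k sigma) \<le> l - 1 \<and> length (add_first_column k sigma) = k"
      using is_partition_add_first_column[OF sigma(1)] first_part_le_iff sigma(3)
      by (simp add: is_partition_def add_first_column_def)
  qed
qed

theorem mainTheorem10:
  fixes l k :: nat
  assumes "l \<ge> 2" and "k \<ge> 1"
  shows "bij_betw Upsilon
           {nu. is_partition nu \<and> first_part nu \<le> l - 1 \<and> length nu = k}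
           {sigma. is_partition sigma \<and> first_part sigma \<le> l - 2 \<and> length sigma \<le> k}
       \<and> (\<forall>lam. is_core l lam \<and> length lam = k \<longrightarrow>
             rho (l - 1) (Phi_tilde l lam) = Upsilon (rho l lam))"
  using bij_betw_Upsilon[OF assms(1)] rho_Phi_tilde[OF _ assms(1)] by blast

end
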